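(* Let $H$ and $K$ be $2$-connected cubic graphs, where $H$ is a snark with $\pi(H)\ge 5$ and $K$ is a $3$-edge-colourable quasi-bipartite graph with a bipartising set $U$. Let $G=H\oplus_3 K$ be a $3$-sum with distinguished vertices $u\in V(H)$ and $v\in V(K)$, where $\{v\}$ is a component of $K-U$ (so $v$ forms a trivial component of the quasi-partite set of $K$). Then: (i) $\pi(G)\ge 5$; (ii) $G$ is quasi-bipartite with bipartising set $U$ (inherited from $K$), and $H-u$ is an element of the corresponding quasi-partite set of $G$, replacing $\{v\}$.
   Context: Graphs are finite; loops and multiple edges are allowed. A snark is a $2$-connected cubic graph with no proper $3$-edge-colouring. The perfect matching index $\pi(G)$ is the smallest number of perfect matchings of $G$ whose union is $E(G)$. A $2$-connected cubic graph $K$ is quasi-bipartite if it contains an independent vertex set $U$ with $|U|\ge 2$ such that contracting each component of $K-U$ to a vertex yields a bipartite cubic graph (possibly with multiple edges) with partite sets $U$ and the set of contracted vertices; $U$ is a bipartising set and the set of components of $K-U$ is the quasi-partite set. A $3$-sum $H\oplus_3 K$ with distinguished vertices $u,v$ deletes $u$ and $v$ and joins the three dangling edge-ends formerly at $u$ bijectively to the three formerly at $v$. *)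

theory Defs
  imports Main "HOL-Library.Extended_Nat"
begin

text \<open>Finite multigraphs (loops and parallel edges allowed) are given by a vertex
  set V, an edge set E and an end map g assigning to each edge its two ends
  (a loop has equal ends).\<close>

definition wf_graph :: "'v set \<Rightarrow> 'e set \<Rightarrow> ('e \<Rightarrow> 'v \<times> 'v) \<Rightarrow> bool" where
  "wf_graph V E g \<longleftrightarrow> finite V \<and> finite E \<and> (\<forall>e\<in>E. fst (g e) \<in> V \<and> snd (g e) \<in> V)"

text \<open>Degree: a loop contributes 2.\<close>
definition deg :: "'v set \<Rightarrow> 'e set \<Rightarrow> ('e \<Rightarrow> 'v \<times> 'v) \<Rightarrow> 'v \<Rightarrow> nat" where
  "deg V E g x = card {e\<in>E. fst (g e) = x} + card {e\<in>E. snd (g e) = x}"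

definition cubic :: "'v set \<Rightarrow> 'e set \<Rightarrow> ('e \<Rightarrow> 'v \<times> 'v) \<Rightarrow> bool" where
  "cubic V E g \<longleftrightarrow> wf_graph V E g \<and> (\<forall>x\<in>V. deg V E g x = 3)"

definition incident :: "('e \<Rightarrow> 'v \<times> 'v) \<Rightarrow> 'e \<Rightarrow> 'v \<Rightarrow> bool" where
  "incident g e x \<longleftrightarrow> fst (g e) = x \<or> snd (g e) = x"

definition adj_rel :: "'v set \<Rightarrow> 'e set \<Rightarrow> ('e \<Rightarrow> 'v \<times> 'v) \<Rightarrow> ('v \<times> 'v) set" where
  "adj_rel W F g = {(x, y). x \<in> W \<and> y \<in> W \<and> (\<exists>e\<in>F. g e = (x, y) \<or> g e = (y, x))}"

definition connected_on :: "'v set \<Rightarrow> 'e set \<Rightarrow> ('e \<Rightarrow> 'v \<times> 'v) \<Rightarrow> bool" where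
  "connected_on W F g \<longleftrightarrow> (\<forall>x\<in>W. \<forall>y\<in>W. (x, y) \<in> (adj_rel W F g)\<^sup>*)"

definition two_connected :: "'v set \<Rightarrow> 'e set \<Rightarrow> ('e \<Rightarrow> 'v \<times> 'v) \<Rightarrow> bool" where
  "two_connected V E g \<longleftrightarrow> wf_graph V E g \<and> card V \<ge> 2 \<and> connected_on V E g
     \<and> (\<forall>w\<in>V. connected_on (V - {w}) E g) \<and> (\<forall>e\<in>E. connected_on V (E - {e}) g)"

definition component :: "'v set \<Rightarrow> 'e set \<Rightarrow> ('e \<Rightarrow> 'v \<times> 'v) \<Rightarrow> 'v \<Rightarrow> 'v set" where
  "component W F g x = {y\<in>W. (x, y) \<in> (adj_rel W F g)\<^sup>*}"

definition components :: "'v set \<Rightarrow> 'e set \<Rightarrow> ('e \<Rightarrow> 'v \<times> 'v) \<Rightarrow> 'v set set" where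
  "components W F g = component W F g ` W"

definition perfect_matching :: "'v set \<Rightarrow> 'e set \<Rightarrow> ('e \<Rightarrow> 'v \<times> 'v) \<Rightarrow> 'e set \<Rightarrow> bool" where
  "perfect_matching V E g M \<longleftrightarrow> M \<subseteq> E \<and> (\<forall>e\<in>M. fst (g e) \<noteq> snd (g e))
     \<and> (\<forall>x\<in>V. card {e\<in>M. incident g e x} = 1)"

text \<open>Perfect matching index (infinite if E is not covered by perfect matchings).\<close>
definition pm_index :: "'v set \<Rightarrow> 'e set \<Rightarrow> ('e \<Rightarrow> 'v \<times> 'v) \<Rightarrow> enat" where
  "pm_index V E g = (INF Ms \<in> {Ms. (\<forall>M\<in>Ms. perfect_matching V E g M) \<and> \<Union>Ms = E}. enat (card Ms))"

definition three_edge_colourable :: "'v set \<Rightarrow> 'e set \<Rightarrow> ('e \<Rightarrow> 'v \<times> 'v) \<Rightarrow> bool" where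
  "three_edge_colourable V E g \<longleftrightarrow> (\<forall>e\<in>E. fst (g e) \<noteq> snd (g e)) \<and>
     (\<exists>c :: 'e \<Rightarrow> nat. (\<forall>e\<in>E. c e < 3) \<and>
        (\<forall>e\<in>E. \<forall>e'\<in>E. e \<noteq> e' \<and> (\<exists>x. incident g e x \<and> incident g e' x) \<longrightarrow> c e \<noteq> c e'))"

definition snark :: "'v set \<Rightarrow> 'e set \<Rightarrow> ('e \<Rightarrow> 'v \<times> 'v) \<Rightarrow> bool" where
  "snark V E g \<longleftrightarrow> two_connected V E g \<and> cubic V E g \<and> \<not> three_edge_colourable V E g"

definition bipartite_with :: "'w set \<Rightarrow> 'e set \<Rightarrow> ('e \<Rightarrow> 'w \<times> 'w) \<Rightarrow> 'w set \<Rightarrow> 'w set \<Rightarrow> bool" where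
  "bipartite_with V E g A B \<longleftrightarrow> A \<union> B = V \<and> A \<inter> B = {} \<and>
     (\<forall>e\<in>E. (fst (g e) \<in> A \<and> snd (g e) \<in> B) \<or> (fst (g e) \<in> B \<and> snd (g e) \<in> A))"

text \<open>Contraction of each component of G - U to a single vertex; vertices of the
  contracted graph are represented as sets: {u} for u in U, and the component C itself.\<close>
definition contr_class :: "'v set \<Rightarrow> 'e set \<Rightarrow> ('e \<Rightarrow> 'v \<times> 'v) \<Rightarrow> 'v set \<Rightarrow> 'v \<Rightarrow> 'v set" where
  "contr_class V E g U x = (if x \<in> U then {x} else component (V - U) E g x)"

definition contr_edges :: "'v set \<Rightarrow> 'e set \<Rightarrow> ('e \<Rightarrow> 'v \<times> 'v) \<Rightarrow> 'v set \<Rightarrow> 'e set" where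
  "contr_edges V E g U = {e\<in>E. contr_class V E g U (fst (g e)) \<noteq> contr_class V E g U (snd (g e))}"

definition contr_ends :: "'v set \<Rightarrow> 'e set \<Rightarrow> ('e \<Rightarrow> 'v \<times> 'v) \<Rightarrow> 'v set \<Rightarrow> 'e \<Rightarrow> 'v set \<times> 'v set" where
  "contr_ends V E g U e = map_prod (contr_class V E g U) (contr_class V E g U) (g e)"

definition bipartising_set :: "'v set \<Rightarrow> 'e set \<Rightarrow> ('e \<Rightarrow> 'v \<times> 'v) \<Rightarrow> 'v set \<Rightarrow> bool" where
  "bipartising_set V E g U \<longleftrightarrow> U \<subseteq> V \<and> card U \<ge> 2 \<and>
     (\<forall>e\<in>E. \<not> (fst (g e) \<in> U \<and> snd (g e) \<in> U)) \<and>
     cubic ((\<lambda>x. {x}) ` U \<union> components (V - U) E g) (contr_edges V E g U) (contr_ends V E g U) \<and>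
     bipartite_with ((\<lambda>x. {x}) ` U \<union> components (V - U) E g) (contr_edges V E g U) (contr_ends V E g U)
        ((\<lambda>x. {x}) ` U) (components (V - U) E g)"

definition quasi_partite_set :: "'v set \<Rightarrow> 'e set \<Rightarrow> ('e \<Rightarrow> 'v \<times> 'v) \<Rightarrow> 'v set \<Rightarrow> 'v set set" where
  "quasi_partite_set V E g U = components (V - U) E g"

definition quasi_bipartite :: "'v set \<Rightarrow> 'e set \<Rightarrow> ('e \<Rightarrow> 'v \<times> 'v) \<Rightarrow> bool" where
  "quasi_bipartite V E g \<longleftrightarrow> two_connected V E g \<and> cubic V E g \<and> (\<exists>U. bipartising_set V E g U)"

definition other_end :: "('e \<Rightarrow> 'v \<times> 'v) \<Rightarrow> 'e \<Rightarrow> 'v \<Rightarrow> 'v" where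
  "other_end g e x = (if fst (g e) = x then snd (g e) else fst (g e))"

text \<open>3-sum of H (vertices tagged Inl) and K (vertices tagged Inr) at u and v.
  sigma is the bijection from the edges at u to the edges at v; the new edge
  joining the dangling ends of e and sigma e is named Inl e.\<close>
definition sum3_V :: "'a set \<Rightarrow> 'a \<Rightarrow> 'b set \<Rightarrow> 'b \<Rightarrow> ('a + 'b) set" where
  "sum3_V VH u VK v = Inl ` (VH - {u}) \<union> Inr ` (VK - {v})"

definition sum3_E :: "'e set \<Rightarrow> ('e \<Rightarrow> 'a \<times> 'a) \<Rightarrow> 'a \<Rightarrow> 'f set \<Rightarrow> ('f \<Rightarrow> 'b \<times> 'b) \<Rightarrow> 'b \<Rightarrow> ('e + 'f) set" where
  "sum3_E EH gH u EK gK v = Inl ` EH \<union> Inr ` {f\<in>EK. \<not> incident gK f v}"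

definition sum3_g :: "('e \<Rightarrow> 'a \<times> 'a) \<Rightarrow> 'a \<Rightarrow> ('f \<Rightarrow> 'b \<times> 'b) \<Rightarrow> 'b \<Rightarrow> ('e \<Rightarrow> 'f)
     \<Rightarrow> ('e + 'f) \<Rightarrow> ('a + 'b) \<times> ('a + 'b)" where
  "sum3_g gH u gK v sigma x = (case x of
      Inl e \<Rightarrow> (if incident gH e u
                then (Inl (other_end gH e u), Inr (other_end gK (sigma e) v))
                else map_prod Inl Inl (gH e))
    | Inr f \<Rightarrow> map_prod Inr Inr (gK f))"

end

theory Submission
  imports Defs
begin

text \<open>Contracting H - u to a single vertex turns the 3-sum G back into K, with H - u in the
  role of the trivial component {v} of K - U. Hence G is cubic and 2-connected, the components
  of G - U are those of K - U with {v} replaced by H - u, and contracting them gives the same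
  bipartite cubic graph as for K, so U stays bipartising.

  For the perfect matching index, let M be a perfect matching of G and N its image in K; N covers
  every vertex of K except possibly v exactly once. Every component of K - U has odd order and
  there are exactly |U| of them, so each sends an odd number of N-edges to U, while U receives
  exactly |U| of them. Thus every component, {v} included, sends exactly one: M meets the 3-edge-cut
  of G in exactly one edge and restricts to a perfect matching of H. A cover of G by k perfect
  matchings therefore yields one of H, and \<pi>(G) \<ge> \<pi>(H) \<ge> 5.\<close>

section \<open>Counting edge ends\<close>

definition ends_at :: "('e \<Rightarrow> 'v \<times> 'v) \<Rightarrow> 'e \<Rightarrow> 'v \<Rightarrow> nat" where
  "ends_at g e x = of_bool (fst (g e) = x) + of_bool (snd (g e) = x)"

definition ends_in :: "('e \<Rightarrow> 'v \<times> 'v) \<Rightarrow> 'e \<Rightarrow> 'v set \<Rightarrow> nat" where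
  "ends_in g e S = of_bool (fst (g e) \<in> S) + of_bool (snd (g e) \<in> S)"

definition boundary :: "('e \<Rightarrow> 'v \<times> 'v) \<Rightarrow> 'e set \<Rightarrow> 'v set \<Rightarrow> 'e set" where
  "boundary g N C = {e\<in>N. ends_in g e C = 1}"

lemma card_filter_eq_sum: "finite A \<Longrightarrow> card {x\<in>A. P x} = (\<Sum>x\<in>A. of_bool (P x))"
  by (simp add: Collect_conj_eq Int_commute)

lemma deg_eq_sum_ends_at: "finite E \<Longrightarrow> deg V E g x = (\<Sum>e\<in>E. ends_at g e x)"
  unfolding deg_def ends_at_def by (simp add: sum.distrib card_filter_eq_sum)

lemma sum_ends_at_eq_ends_in: "finite S \<Longrightarrow> (\<Sum>x\<in>S. ends_at g e x) = ends_in g e S"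
  unfolding ends_at_def ends_in_def by (simp add: sum.distrib)

lemma sum_deg_eq_sum_ends_in:
  "finite S \<Longrightarrow> finite E \<Longrightarrow> (\<Sum>x\<in>S. deg V E g x) = (\<Sum>e\<in>E. ends_in g e S)"
  by (simp add: deg_eq_sum_ends_at sum_ends_at_eq_ends_in flip: sum.swap)

lemma sum_ends_at_le_deg:
  "finite E \<Longrightarrow> N \<subseteq> E \<Longrightarrow> (\<Sum>e\<in>N. ends_at g e x) \<le> deg V E g x"
  by (simp add: deg_eq_sum_ends_at sum_mono2)

lemma card_incident_eq_sum_ends_at:
  assumes "finite N" "\<forall>e\<in>N. fst (g e) \<noteq> snd (g e)"
  shows "card {e\<in>N. incident g e x} = (\<Sum>e\<in>N. ends_at g e x)"
proof -
  have "ends_at g e x = of_bool (incident g e x)" if "e \<in> N" for e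
    using assms(2) that unfolding ends_at_def incident_def by auto
  then show ?thesis
    using assms(1) by (simp add: card_filter_eq_sum)
qed

lemma deg_eq_card_incident:
  "finite E \<Longrightarrow> \<forall>e\<in>E. fst (g e) \<noteq> snd (g e) \<Longrightarrow> deg V E g x = card {e\<in>E. incident g e x}"
  by (simp add: deg_eq_sum_ends_at card_incident_eq_sum_ends_at)

lemma sum_ends_in_eq_card:
  assumes "finite N" "finite S" "\<forall>e\<in>N. fst (g e) \<noteq> snd (g e)"
    and "\<And>x. x \<in> S \<Longrightarrow> card {e\<in>N. incident g e x} = 1"
  shows "(\<Sum>e\<in>N. ends_in g e S) = card S"
proof -
  have "(\<Sum>e\<in>N. ends_in g e S) = (\<Sum>x\<in>S. \<Sum>e\<in>N. ends_at g e x)"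
    using assms(2) by (simp add: sum_ends_at_eq_ends_in flip: sum.swap)
  also have "\<dots> = (\<Sum>x\<in>S. card {e\<in>N. incident g e x})"
    using card_incident_eq_sum_ends_at[OF assms(1,3)] by simp
  finally show ?thesis
    using assms(4) by simp
qed

lemma even_sum_ends_in_iff:
  assumes "finite N"
  shows "even (\<Sum>e\<in>N. ends_in g e C) \<longleftrightarrow> even (card (boundary g N C))"
proof -
  have "{e\<in>N. odd (ends_in g e C)} = boundary g N C"
    unfolding boundary_def ends_in_def by auto
  then show ?thesis
    using assms by (simp add: even_sum_iff)
qed

lemma boundary_singleton:
  "\<forall>e\<in>N. fst (g e) \<noteq> snd (g e) \<Longrightarrow> boundary g N {x} = {e\<in>N. incident g e x}"
  unfolding boundary_def ends_in_def incident_def by auto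

lemma other_end_eq:
  "g e = (z, w) \<or> g e = (w, z) \<Longrightarrow> z \<noteq> w \<Longrightarrow> other_end g e w = z \<and> incident g e w"
  by (cases "g e") (auto simp: other_end_def incident_def)

section \<open>Walks and components\<close>

lemma adj_rel_sym: "sym (adj_rel W F g)"
  unfolding adj_rel_def sym_def by auto

lemma rtrancl_adj_rel_sym: "(x, y) \<in> (adj_rel W F g)\<^sup>* \<Longrightarrow> (y, x) \<in> (adj_rel W F g)\<^sup>*"
  by (meson adj_rel_sym sym_rtrancl symD)

lemma rtrancl_adj_rel_in: "(x, y) \<in> (adj_rel W F g)\<^sup>* \<Longrightarrow> x \<in> W \<Longrightarrow> y \<in> W"
  by (induction rule: rtrancl_induct) (auto simp: adj_rel_def)

lemma connected_onI_hub:
  assumes "\<And>x. x \<in> W \<Longrightarrow> (x, r) \<in> (adj_rel W F g)\<^sup>*"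
  shows "connected_on W F g"
  unfolding connected_on_def
proof (intro ballI)
  fix x y assume "x \<in> W" "y \<in> W"
  then have "(x, r) \<in> (adj_rel W F g)\<^sup>*" "(r, y) \<in> (adj_rel W F g)\<^sup>*"
    using assms[of x] assms[of y] rtrancl_adj_rel_sym[of y r] by auto
  then show "(x, y) \<in> (adj_rel W F g)\<^sup>*"
    by (rule rtrancl_trans)
qed

lemma rtrancl_adj_rel_last_edge:
  assumes "(y, t) \<in> (adj_rel W F g)\<^sup>*" "y \<noteq> t"
  obtains z e where "z \<in> W - {t}" "e \<in> F" "g e = (z, t) \<or> g e = (t, z)"
    "(y, z) \<in> (adj_rel (W - {t}) F g)\<^sup>*"
  using assms
proof (induction arbitrary: thesis rule: converse_rtrancl_induct)
  case base
  then show ?case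
    by simp
next
  case (step y y')
  from step.hyps(1) obtain e where e: "e \<in> F" "g e = (y, y') \<or> g e = (y', y)" "y \<in> W" "y' \<in> W"
    unfolding adj_rel_def by auto
  show ?case
  proof (cases "y' = t")
    case True
    then show ?thesis
      using step.prems e by blast
  next
    case False
    then obtain z e' where z: "z \<in> W - {t}" "e' \<in> F" "g e' = (z, t) \<or> g e' = (t, z)"
      "(y', z) \<in> (adj_rel (W - {t}) F g)\<^sup>*"
      using step.IH by blast
    have "(y, y') \<in> adj_rel (W - {t}) F g"
      using e False step.prems(2) unfolding adj_rel_def by auto
    then show ?thesis
      using step.prems(1) z converse_rtrancl_into_rtrancl by metis
  qed
qed

lemma rtrancl_adj_rel_map:
  assumes "(a, b) \<in> (adj_rel W F g)\<^sup>*" "\<phi> ` W \<subseteq> W'"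
    and "\<And>e. e \<in> F \<Longrightarrow> fst (g e) \<in> W \<Longrightarrow> snd (g e) \<in> W \<Longrightarrow> \<exists>e'\<in>F'. g' e' = map_prod \<phi> \<phi> (g e)"
  shows "(\<phi> a, \<phi> b) \<in> (adj_rel W' F' g')\<^sup>*"
  using assms(1)
proof (induction rule: rtrancl_induct)
  case base
  then show ?case
    by simp
next
  case (step b c)
  from step.hyps(2) obtain e where e: "e \<in> F" "g e = (b, c) \<or> g e = (c, b)" "b \<in> W" "c \<in> W"
    unfolding adj_rel_def by auto
  moreover have "fst (g e) \<in> W" "snd (g e) \<in> W"
    using e by auto
  ultimately obtain e' where "e' \<in> F'" "g' e' = map_prod \<phi> \<phi> (g e)"
    using assms(3) by blast
  then have "(\<phi> b, \<phi> c) \<in> adj_rel W' F' g'"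
    using e assms(2) unfolding adj_rel_def by auto
  with step.IH show ?case
    by simp
qed

lemma component_self: "x \<in> W \<Longrightarrow> x \<in> component W F g x"
  unfolding component_def by auto

lemma component_eq: "y \<in> component W F g x \<Longrightarrow> component W F g y = component W F g x"
proof -
  assume "y \<in> component W F g x"
  then have xy: "(x, y) \<in> (adj_rel W F g)\<^sup>*" and yx: "(y, x) \<in> (adj_rel W F g)\<^sup>*"
    unfolding component_def using rtrancl_adj_rel_sym by auto
  show ?thesis
    unfolding component_def by (auto intro: rtrancl_trans[OF xy] rtrancl_trans[OF yx])
qed

lemma components_subset: "C \<in> components W F g \<Longrightarrow> C \<subseteq> W"
  unfolding components_def component_def by auto

lemma component_eq_components:
  assumes "C \<in> components W F g" "x \<in> C"
  shows "component W F g x = C"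
proof -
  obtain y where "C = component W F g y"
    using assms(1) unfolding components_def by auto
  then show ?thesis
    using component_eq[of x W F g y] assms(2) by simp
qed

lemma mem_components_iff:
  "C \<in> components W F g \<Longrightarrow> x \<in> W \<Longrightarrow> x \<in> C \<longleftrightarrow> C = component W F g x"
  using component_eq_components[of C W F g x] component_self[of x W F g] by auto

lemma finite_components: "finite W \<Longrightarrow> finite (components W F g)"
  unfolding components_def by simp

section \<open>Loops, isomorphisms and the perfect matching index\<close>

text \<open>A loop at x leaves a single further edge e' at x; deleting e' isolates x, so
  a second such edge e'' must exist, and x would have degree at least 4.\<close>
lemma two_connected_cubic_loopless:
  assumes conn: "two_connected V E g" and cub: "cubic V E g" and e: "e \<in> E"
  shows "fst (g e) \<noteq> snd (g e)"
proof
  assume loop: "fst (g e) = snd (g e)"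
  define x where "x = fst (g e)"
  have fin: "finite V" "finite E" and x: "x \<in> V"
    using conn e unfolding two_connected_def wf_graph_def x_def by auto
  obtain y where y: "y \<in> V" "y \<noteq> x"
  proof -
    have "\<not> V \<subseteq> {x}"
      using conn card_mono[of "{x}" V] unfolding two_connected_def by auto
    then show thesis
      using that by blast
  qed
  have "(y, x) \<in> (adj_rel V E g)\<^sup>*"
    using conn y x unfolding two_connected_def connected_on_def by auto
  then obtain z e' where z: "z \<noteq> x" "e' \<in> E" "g e' = (z, x) \<or> g e' = (x, z)"
    using y(2) by (rule rtrancl_adj_rel_last_edge) auto
  have "(z, x) \<in> (adj_rel V (E - {e'}) g)\<^sup>*"
    using conn z(2) x wf_graph_def z(3) unfolding two_connected_def connected_on_def
    by (metis fst_conv snd_conv)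
  then obtain z' e'' where z': "z' \<noteq> x" "e'' \<in> E - {e'}" "g e'' = (z', x) \<or> g e'' = (x, z')"
    using z(1) by (rule rtrancl_adj_rel_last_edge) auto
  have distinct: "e \<noteq> e'" "e \<noteq> e''" "e' \<noteq> e''"
    using loop z z' unfolding x_def by (metis fst_conv snd_conv, metis fst_conv snd_conv, blast)
  have "4 = (\<Sum>f\<in>{e, e', e''}. ends_at g f x)"
    using distinct loop z(1,3) z'(1,3) unfolding ends_at_def x_def by auto
  also have "\<dots> \<le> deg V E g x"
    using e z(2) z'(2) fin by (intro sum_ends_at_le_deg) auto
  also have "\<dots> = 3"
    using cub x unfolding cubic_def by auto
  finally show False
    by simp
qed

definition graph_iso ::
  "('e' \<Rightarrow> 'e) \<Rightarrow> ('v \<Rightarrow> 'v') \<Rightarrow> 'v set \<Rightarrow> 'e set \<Rightarrow> ('e \<Rightarrow> 'v \<times> 'v)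
     \<Rightarrow> 'v' set \<Rightarrow> 'e' set \<Rightarrow> ('e' \<Rightarrow> 'v' \<times> 'v') \<Rightarrow> bool" where
  "graph_iso \<rho> \<psi> V E g V' E' g' \<longleftrightarrow> bij_betw \<rho> E' E \<and> inj_on \<psi> V \<and> \<psi> ` V = V' \<and>
     (\<forall>e\<in>E'. g' e = map_prod \<psi> \<psi> (g (\<rho> e)) \<or> g' e = prod.swap (map_prod \<psi> \<psi> (g (\<rho> e))))"

lemma ends_at_image:
  assumes "inj_on \<psi> V" "fst (g e) \<in> V" "snd (g e) \<in> V" "x \<in> V"
    and "g' e' = map_prod \<psi> \<psi> (g e) \<or> g' e' = prod.swap (map_prod \<psi> \<psi> (g e))"
  shows "ends_at g' e' (\<psi> x) = ends_at g e x"
proof -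
  have "\<psi> (fst (g e)) = \<psi> x \<longleftrightarrow> fst (g e) = x" "\<psi> (snd (g e)) = \<psi> x \<longleftrightarrow> snd (g e) = x"
    using assms(1-4) by (meson inj_on_eq_iff)+
  then show ?thesis
    using assms(5) by (cases "g e") (auto simp: ends_at_def)
qed

lemma wf_graph_graph_iso:
  assumes iso: "graph_iso \<rho> \<psi> V E g V' E' g'" and wf: "wf_graph V E g"
  shows "wf_graph V' E' g'"
  unfolding wf_graph_def
proof (intro conjI ballI)
  have "bij_betw \<rho> E' E" "\<psi> ` V = V'"
    using iso unfolding graph_iso_def by auto
  then show "finite V'" "finite E'"
    using wf bij_betw_finite unfolding wf_graph_def by auto
next
  fix e assume e: "e \<in> E'"
  then have "fst (g (\<rho> e)) \<in> V" "snd (g (\<rho> e)) \<in> V"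
    using iso wf unfolding graph_iso_def bij_betw_def wf_graph_def by auto
  then show "fst (g' e) \<in> V'" "snd (g' e) \<in> V'"
    using iso e unfolding graph_iso_def by (cases "g (\<rho> e)"; force)+
qed

lemma cubic_graph_iso:
  assumes iso: "graph_iso \<rho> \<psi> V E g V' E' g'" and cub: "cubic V E g"
  shows "cubic V' E' g'"
proof -
  have \<rho>: "bij_betw \<rho> E' E" and inj: "inj_on \<psi> V" and im: "\<psi> ` V = V'"
    and ends: "\<And>e. e \<in> E' \<Longrightarrow> g' e = map_prod \<psi> \<psi> (g (\<rho> e)) \<or> g' e = prod.swap (map_prod \<psi> \<psi> (g (\<rho> e)))"
    using iso unfolding graph_iso_def by auto
  have wf: "wf_graph V E g"
    using cub unfolding cubic_def by simp
  then have wf': "wf_graph V' E' g'"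
    by (rule wf_graph_graph_iso[OF iso])
  then have "finite E'"
    unfolding wf_graph_def by simp
  have "deg V' E' g' (\<psi> x) = 3" if x: "x \<in> V" for x
  proof -
    have "deg V' E' g' (\<psi> x) = (\<Sum>e\<in>E'. ends_at g (\<rho> e) x)"
      unfolding deg_eq_sum_ends_at[OF \<open>finite E'\<close>]
    proof (rule sum.cong)
      fix e assume e: "e \<in> E'"
      then have "\<rho> e \<in> E"
        using \<rho> unfolding bij_betw_def by auto
      then have "fst (g (\<rho> e)) \<in> V" "snd (g (\<rho> e)) \<in> V"
        using wf unfolding wf_graph_def by auto
      with inj x ends[OF e] show "ends_at g' e (\<psi> x) = ends_at g (\<rho> e) x"
        by (intro ends_at_image)
    qed simp
    also have "\<dots> = deg V E g x"
      using sum.reindex_bij_betw[OF \<rho>, of "\<lambda>f. ends_at g f x"] wf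
      unfolding wf_graph_def by (simp add: deg_eq_sum_ends_at)
    finally show ?thesis
      using cub x unfolding cubic_def by auto
  qed
  then show ?thesis
    unfolding cubic_def using wf' im by auto
qed

lemma bipartite_with_graph_iso:
  assumes iso: "graph_iso \<rho> \<psi> V E g V' E' g'" and bip: "bipartite_with V E g A B"
  shows "bipartite_with V' E' g' (\<psi> ` A) (\<psi> ` B)"
proof -
  have \<rho>: "bij_betw \<rho> E' E" and inj: "inj_on \<psi> V" and im: "\<psi> ` V = V'"
    and ends: "\<And>e. e \<in> E' \<Longrightarrow> g' e = map_prod \<psi> \<psi> (g (\<rho> e)) \<or> g' e = prod.swap (map_prod \<psi> \<psi> (g (\<rho> e)))"
    using iso unfolding graph_iso_def by auto
  have AB: "A \<union> B = V" "A \<inter> B = {}"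
    using bip unfolding bipartite_with_def by auto
  have "\<psi> ` A \<inter> \<psi> ` B = \<psi> ` (A \<inter> B)"
    using inj AB(1) by (intro inj_on_image_Int[symmetric]) auto
  moreover have "(fst (g' e) \<in> \<psi> ` A \<and> snd (g' e) \<in> \<psi> ` B) \<or> (fst (g' e) \<in> \<psi> ` B \<and> snd (g' e) \<in> \<psi> ` A)"
    if e: "e \<in> E'" for e
  proof -
    have "\<rho> e \<in> E"
      using \<rho> e unfolding bij_betw_def by auto
    then have "(fst (g (\<rho> e)) \<in> A \<and> snd (g (\<rho> e)) \<in> B) \<or> (fst (g (\<rho> e)) \<in> B \<and> snd (g (\<rho> e)) \<in> A)"
      using bip unfolding bipartite_with_def by auto
    then show ?thesis
      using ends[OF e] by (cases "g (\<rho> e)") auto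
  qed
  ultimately show ?thesis
    using AB im unfolding bipartite_with_def by auto
qed

lemma bipartite_cubic_card_eq:
  assumes bip: "bipartite_with V E g A B" and cub: "cubic V E g"
  shows "card A = card B"
proof -
  have fin: "finite V" "finite E"
    using cub unfolding cubic_def wf_graph_def by auto
  have AB: "A \<union> B = V" "A \<inter> B = {}"
    using bip unfolding bipartite_with_def by auto
  have "3 * card S = card E" if S: "S = A \<or> S = B" for S
  proof -
    have "finite S"
      using fin AB S by (metis finite_Un)
    have "3 * card S = (\<Sum>x\<in>S. deg V E g x)"
      using cub AB S unfolding cubic_def by auto
    also have "\<dots> = (\<Sum>e\<in>E. ends_in g e S)"
      using \<open>finite S\<close> fin(2) by (rule sum_deg_eq_sum_ends_in)
    also have "\<dots> = (\<Sum>e\<in>E. 1)"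
      using bip AB(2) S unfolding bipartite_with_def ends_in_def by (intro sum.cong) auto
    finally show ?thesis
      by simp
  qed
  from this[of A] this[of B] show ?thesis
    by simp
qed

lemma pm_index_le_pullback:
  assumes fin: "finite E" and h: "h ` E' \<subseteq> E"
    and pm: "\<And>M. perfect_matching V E g M \<Longrightarrow> perfect_matching V' E' g' {e\<in>E'. h e \<in> M}"
  shows "pm_index V' E' g' \<le> pm_index V E g"
  unfolding pm_index_def
proof (rule INF_greatest)
  fix Ms assume Ms: "Ms \<in> {Ms. (\<forall>M\<in>Ms. perfect_matching V E g M) \<and> \<Union>Ms = E}"
  define pull where "pull M = {e\<in>E'. h e \<in> M}" for M
  have "finite Ms"
    using Ms fin finite_subset[of Ms "Pow E"] by auto
  have "\<Union>(pull ` Ms) = E'"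
  proof
    show "E' \<subseteq> \<Union>(pull ` Ms)"
      using Ms h unfolding pull_def by auto
  qed (auto simp: pull_def)
  then have "pull ` Ms \<in> {Ms. (\<forall>M\<in>Ms. perfect_matching V' E' g' M) \<and> \<Union>Ms = E'}"
    using Ms pm unfolding pull_def by auto
  then have "(INF Ms \<in> {Ms. (\<forall>M\<in>Ms. perfect_matching V' E' g' M) \<and> \<Union>Ms = E'}. enat (card Ms))
      \<le> enat (card (pull ` Ms))"
    by (rule INF_lower)
  also have "\<dots> \<le> enat (card Ms)"
    using card_image_le[OF \<open>finite Ms\<close>] by simp
  finally show "(INF Ms \<in> {Ms. (\<forall>M\<in>Ms. perfect_matching V' E' g' M) \<and> \<Union>Ms = E'}. enat (card Ms))
      \<le> enat (card Ms)" .
qed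

section \<open>Cubic graphs with a bipartising set\<close>

locale bipartised_cubic =
  fixes V :: "'v set" and E :: "'e set" and g :: "'e \<Rightarrow> 'v \<times> 'v" and U :: "'v set"
  assumes cubic: "cubic V E g"
    and loopless: "\<forall>e\<in>E. fst (g e) \<noteq> snd (g e)"
    and bipartising: "bipartising_set V E g U"
begin

abbreviation "Cs \<equiv> components (V - U) E g"
abbreviation "contr \<equiv> contr_class V E g U"

lemma finite: "finite V" "finite E"
  and ends_in_V: "e \<in> E \<Longrightarrow> fst (g e) \<in> V \<and> snd (g e) \<in> V"
  using cubic unfolding cubic_def wf_graph_def by auto

lemma U_subset: "U \<subseteq> V"
  and card_U: "2 \<le> card U"
  and U_independent: "e \<in> E \<Longrightarrow> \<not> (fst (g e) \<in> U \<and> snd (g e) \<in> U)"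
  and contraction_cubic:
    "cubic ((\<lambda>x. {x}) ` U \<union> Cs) (contr_edges V E g U) (contr_ends V E g U)"
  and contraction_bipartite:
    "bipartite_with ((\<lambda>x. {x}) ` U \<union> Cs) (contr_edges V E g U) (contr_ends V E g U) ((\<lambda>x. {x}) ` U) Cs"
  using bipartising unfolding bipartising_set_def by auto

lemma finite_U: "finite U"
  using U_subset finite finite_subset by blast

lemma finite_Cs: "finite Cs"
  using finite by (simp add: finite_components)

lemma finite_component: "C \<in> Cs \<Longrightarrow> finite C"
  using components_subset finite finite_subset by (metis Diff_subset order_trans)

lemma contr_eq_iff: "C \<in> Cs \<Longrightarrow> x \<in> V \<Longrightarrow> contr x = C \<longleftrightarrow> x \<in> C"
  unfolding contr_class_def
  using components_subset[of C] mem_components_iff[of C "V - U" E g x] by auto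

lemma ends_at_contr_ends:
  assumes "C \<in> Cs" "e \<in> E"
  shows "ends_at (contr_ends V E g U) e C = ends_in g e C"
  using contr_eq_iff[OF assms(1)] ends_in_V[OF assms(2)]
  unfolding ends_at_def ends_in_def contr_ends_def by (cases "g e") auto

text \<open>The degree of C in the contraction counts the edges with exactly one end in C.\<close>
lemma card_boundary_component:
  assumes C: "C \<in> Cs"
  shows "card (boundary g E C) = 3"
proof -
  let ?E1 = "contr_edges V E g U"
  have E1: "?E1 \<subseteq> E"
    unfolding contr_edges_def by auto
  have in_C_iff: "fst (g e) \<in> C \<longleftrightarrow> contr (fst (g e)) = C" "snd (g e) \<in> C \<longleftrightarrow> contr (snd (g e)) = C"
    if "e \<in> E" for e
    using contr_eq_iff[OF C] ends_in_V[OF that] by simp_all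
  have inside: "ends_in g e C \<noteq> 1" if "e \<in> E - ?E1" for e
  proof -
    have "contr (fst (g e)) = contr (snd (g e))"
      using that unfolding contr_edges_def by simp
    then show ?thesis
      using in_C_iff[of e] that unfolding ends_in_def by auto
  qed
  have across: "ends_at (contr_ends V E g U) e C = of_bool (ends_in g e C = 1)" if "e \<in> ?E1" for e
  proof -
    have "e \<in> E" "contr (fst (g e)) \<noteq> contr (snd (g e))"
      using that unfolding contr_edges_def by simp_all
    then show ?thesis
      using in_C_iff[of e] ends_at_contr_ends[OF C] unfolding ends_in_def by auto
  qed
  have "3 = deg ((\<lambda>x. {x}) ` U \<union> Cs) ?E1 (contr_ends V E g U) C"
    using contraction_cubic C unfolding cubic_def by auto
  also have "\<dots> = (\<Sum>e\<in>?E1. of_bool (ends_in g e C = 1))"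
    using finite_subset[OF E1 finite(2)] by (simp add: deg_eq_sum_ends_at across del: sum_of_bool_eq)
  also have "\<dots> = (\<Sum>e\<in>E. of_bool (ends_in g e C = 1))"
    using inside by (intro sum.mono_neutral_left[OF finite(2) E1]) auto
  also have "\<dots> = card (boundary g E C)"
    unfolding boundary_def by (simp add: card_filter_eq_sum[OF finite(2)])
  finally show ?thesis
    by simp
qed

lemma odd_card_component:
  assumes C: "C \<in> Cs"
  shows "odd (card C)"
proof -
  have "(\<Sum>x\<in>C. deg V E g x) = (\<Sum>x\<in>C. 3)"
    using cubic components_subset[OF C] unfolding cubic_def by (intro sum.cong) auto
  then have "3 * card C = (\<Sum>x\<in>C. deg V E g x)"
    by simp
  also have "\<dots> = (\<Sum>e\<in>E. ends_in g e C)"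
    by (rule sum_deg_eq_sum_ends_in[OF finite_component[OF C] finite(2)])
  finally have "odd (3 * card C)"
    using even_sum_ends_in_iff[OF finite(2), of g C] card_boundary_component[OF C] by simp
  then show ?thesis
    by simp
qed

lemma card_components: "card Cs = card U"
proof -
  have "card ((\<lambda>x. {x}) ` U) = card U"
    by (rule card_image) (simp add: inj_on_def)
  then show ?thesis
    using bipartite_cubic_card_eq[OF contraction_bipartite contraction_cubic] by simp
qed

lemma components_containing: "y \<in> V - U \<Longrightarrow> {C\<in>Cs. y \<in> C} = {component (V - U) E g y}"
  using mem_components_iff[of _ "V - U" E g y] unfolding components_def by auto

lemma card_components_crossed:
  assumes e: "e \<in> E"
  shows "card {C\<in>Cs. ends_in g e C = 1} = ends_in g e U"
proof -
  obtain a b where ab: "g e = (a, b)"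
    by fastforce
  have V: "a \<in> V" "b \<in> V" and not_UU: "\<not> (a \<in> U \<and> b \<in> U)"
    using ends_in_V[OF e] U_independent[OF e] ab by auto
  have not_in_U: "x \<notin> C" if "x \<in> U" "C \<in> Cs" for x C
    using that components_subset by blast
  consider "a \<in> U" "b \<in> V - U" | "b \<in> U" "a \<in> V - U" | "a \<in> V - U" "b \<in> V - U"
    using V not_UU by auto
  then show ?thesis
  proof cases
    case 1
    then have "{C\<in>Cs. ends_in g e C = 1} = {C\<in>Cs. b \<in> C}"
      using ab not_in_U unfolding ends_in_def by auto
    then show ?thesis
      using 1 ab components_containing unfolding ends_in_def by simp
  next
    case 2
    then have "{C\<in>Cs. ends_in g e C = 1} = {C\<in>Cs. a \<in> C}"
      using ab not_in_U unfolding ends_in_def by auto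
    then show ?thesis
      using 2 ab components_containing unfolding ends_in_def by simp
  next
    case 3
    then have "(a, b) \<in> adj_rel (V - U) E g"
      using e ab unfolding adj_rel_def by auto
    then have "component (V - U) E g b = component (V - U) E g a"
      using 3 by (intro component_eq) (auto simp: component_def)
    then have "ends_in g e C \<noteq> 1" if "C \<in> Cs" for C
      using mem_components_iff[OF that, of a] mem_components_iff[OF that, of b] 3 ab
      unfolding ends_in_def by auto
    then have "{C\<in>Cs. ends_in g e C = 1} = {}"
      by blast
    moreover have "ends_in g e U = 0"
      using 3 ab unfolding ends_in_def by simp
    ultimately show ?thesis
      by (metis card.empty)
  qed
qed

lemma sum_boundary_components:
  assumes N: "N \<subseteq> E"
  shows "(\<Sum>C\<in>Cs. card (boundary g N C)) = (\<Sum>e\<in>N. ends_in g e U)"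
proof -
  have finN: "finite N"
    using N finite finite_subset by blast
  have "(\<Sum>C\<in>Cs. card (boundary g N C)) = (\<Sum>C\<in>Cs. \<Sum>e\<in>N. of_bool (ends_in g e C = 1))"
    unfolding boundary_def by (simp add: card_filter_eq_sum[OF finN] del: sum_of_bool_eq)
  also have "\<dots> = (\<Sum>e\<in>N. card {C\<in>Cs. ends_in g e C = 1})"
    by (subst sum.swap) (simp add: card_filter_eq_sum[OF finite_Cs] del: sum_of_bool_eq)
  also have "\<dots> = (\<Sum>e\<in>N. ends_in g e U)"
    using N card_components_crossed by (intro sum.cong) auto
  finally show ?thesis .
qed

lemma odd_card_boundary_covered_component:
  assumes C: "C \<in> Cs" and N: "N \<subseteq> E"
    and one: "\<And>y. y \<in> C \<Longrightarrow> card {e\<in>N. incident g e y} = 1"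
  shows "odd (card (boundary g N C))"
proof -
  have finN: "finite N"
    using N finite finite_subset by blast
  have "(\<Sum>e\<in>N. ends_in g e C) = card C"
    using N loopless finite_component[OF C] one by (intro sum_ends_in_eq_card[OF finN]) auto
  then show ?thesis
    using odd_card_component[OF C] even_sum_ends_in_iff[OF finN, of g C] by simp
qed

text \<open>Each of the |U| components sends an odd number of N-edges to U, which receives
  exactly |U| of them; so each sends exactly one.\<close>
lemma card_incident_trivial_component:
  assumes v: "{v} \<in> Cs" and N: "N \<subseteq> E"
    and one: "\<And>y. y \<in> V - {v} \<Longrightarrow> card {e\<in>N. incident g e y} = 1"
  shows "card {e\<in>N. incident g e v} = 1"
proof -
  let ?b = "\<lambda>C. card (boundary g N C)"
  let ?Cs' = "Cs - {{v}}"
  have "v \<notin> U"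
    using components_subset[OF v] by auto
  have "card U = (\<Sum>e\<in>N. ends_in g e U)"
    using N finite_subset[OF N finite(2)] finite_U loopless one U_subset \<open>v \<notin> U\<close>
    by (intro sum_ends_in_eq_card[symmetric]) auto
  also have "\<dots> = ?b {v} + (\<Sum>C\<in>?Cs'. ?b C)"
    using sum_boundary_components[OF N] sum.remove[OF finite_Cs v, of ?b] by simp
  finally have total: "card U = ?b {v} + (\<Sum>C\<in>?Cs'. ?b C)" .
  have odd: "odd (?b C)" if C: "C \<in> ?Cs'" for C
  proof -
    have "v \<notin> C"
      using C component_eq_components[of C "V - U" E g v] component_eq_components[OF v, of v] by auto
    then have "C \<subseteq> V - {v}"
      using C components_subset[of C "V - U" E g] by auto
    then show ?thesis
      using C N one by (intro odd_card_boundary_covered_component) auto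
  qed
  have card_Cs': "card ?Cs' = card U - 1"
    using card_components v finite_Cs by simp
  have "(\<Sum>C\<in>?Cs'. 1) \<le> (\<Sum>C\<in>?Cs'. ?b C)"
    using odd by (intro sum_mono) (simp add: odd_pos Suc_le_eq)
  then have "?b {v} \<le> 1"
    using total card_Cs' card_U by simp
  moreover have "?b {v} \<noteq> 0"
  proof
    assume "?b {v} = 0"
    then have "(\<Sum>C\<in>?Cs'. ?b C) = card ?Cs' + 1"
      using total card_Cs' card_U by simp
    moreover have "even (\<Sum>C\<in>?Cs'. ?b C) \<longleftrightarrow> even (card ?Cs')"
      using odd finite_Cs by (subst even_sum_iff) (auto intro!: arg_cong[where f = "\<lambda>A. even (card A)"])
    ultimately show False
      by simp
  qed
  ultimately have "?b {v} = 1"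
    by simp
  moreover have "\<forall>e\<in>N. fst (g e) \<noteq> snd (g e)"
    using N loopless by auto
  ultimately show ?thesis
    using boundary_singleton by metis
qed

end

section \<open>The 3-sum\<close>

locale three_sum =
  fixes VH :: "'a set" and EH :: "'e set" and gH :: "'e \<Rightarrow> 'a \<times> 'a" and u :: 'a
    and VK :: "'b set" and EK :: "'f set" and gK :: "'f \<Rightarrow> 'b \<times> 'b" and v :: 'b
    and U :: "'b set" and sigma :: "'e \<Rightarrow> 'f"
  assumes H_two_connected: "two_connected VH EH gH" and H_cubic: "cubic VH EH gH"
    and K_two_connected: "two_connected VK EK gK" and K_cubic: "cubic VK EK gK"
    and bipartising: "bipartising_set VK EK gK U"
    and u: "u \<in> VH" and v: "v \<in> VK"
    and trivial_component: "{v} \<in> quasi_partite_set VK EK gK U"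
    and sigma: "bij_betw sigma {e\<in>EH. incident gH e u} {f\<in>EK. incident gK f v}"
begin

lemma H_loopless: "\<forall>e\<in>EH. fst (gH e) \<noteq> snd (gH e)"
  using two_connected_cubic_loopless[OF H_two_connected H_cubic] by blast

lemma K_loopless: "\<forall>f\<in>EK. fst (gK f) \<noteq> snd (gK f)"
  using two_connected_cubic_loopless[OF K_two_connected K_cubic] by blast

sublocale K: bipartised_cubic VK EK gK U
  using K_cubic K_loopless bipartising by unfold_locales

abbreviation "VG \<equiv> sum3_V VH u VK v"
abbreviation "EG \<equiv> sum3_E EH gH u EK gK v"
abbreviation "gG \<equiv> sum3_g gH u gK v sigma"
abbreviation "cut_H \<equiv> {e\<in>EH. incident gH e u}"
abbreviation "cut_K \<equiv> {f\<in>EK. incident gK f v}"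
abbreviation "inner_K \<equiv> {f\<in>EK. \<not> incident gK f v}"
abbreviation "oH e \<equiv> other_end gH e u"
abbreviation "oK f \<equiv> other_end gK f v"

lemma finite_H: "finite VH" "finite EH"
  and ends_in_VH: "e \<in> EH \<Longrightarrow> fst (gH e) \<in> VH \<and> snd (gH e) \<in> VH"
  using H_cubic unfolding cubic_def wf_graph_def by auto

lemma v_component: "{v} \<in> K.Cs"
  using trivial_component unfolding quasi_partite_set_def .

lemma v_notin_U: "v \<notin> U"
  using components_subset[OF v_component] by auto

lemma component_v: "component (VK - U) EK gK v = {v}"
  using component_eq_components[OF v_component] by simp

lemma cut_H_ends: "e \<in> cut_H \<Longrightarrow> oH e \<in> VH - {u} \<and> (gH e = (u, oH e) \<or> gH e = (oH e, u))"
  using H_loopless ends_in_VH[of e] unfolding incident_def other_end_def by (cases "gH e") auto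

text \<open>The edges at v lead to U, since v alone is a component of K - U.\<close>
lemma cut_K_ends: "f \<in> cut_K \<Longrightarrow> oK f \<in> U \<and> (gK f = (v, oK f) \<or> gK f = (oK f, v))"
proof -
  assume f: "f \<in> cut_K"
  then have ends: "oK f \<in> VK - {v}" "gK f = (v, oK f) \<or> gK f = (oK f, v)"
    using K_loopless K.ends_in_V[of f] unfolding incident_def other_end_def by (cases "gK f"; auto)+
  have "oK f \<in> U"
  proof (rule ccontr)
    assume "oK f \<notin> U"
    then have "(v, oK f) \<in> adj_rel (VK - U) EK gK"
      using f ends v v_notin_U unfolding adj_rel_def by auto
    then have "oK f \<in> component (VK - U) EK gK v"
      using ends(1) \<open>oK f \<notin> U\<close> unfolding component_def by auto
    then show False
      using component_v ends(1) by auto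
  qed
  then show ?thesis
    using ends by simp
qed

lemma inner_H_ends: "e \<in> EH \<Longrightarrow> \<not> incident gH e u \<Longrightarrow> fst (gH e) \<in> VH - {u} \<and> snd (gH e) \<in> VH - {u}"
  using ends_in_VH[of e] unfolding incident_def by auto

lemma inner_K_ends: "f \<in> inner_K \<Longrightarrow> fst (gK f) \<in> VK - {v} \<and> snd (gK f) \<in> VK - {v}"
  using K.ends_in_V[of f] unfolding incident_def by auto

lemma sigma_cut: "e \<in> cut_H \<Longrightarrow> sigma e \<in> cut_K"
  using sigma unfolding bij_betw_def by auto

lemma gG_Inl_cut: "incident gH e u \<Longrightarrow> gG (Inl e) = (Inl (oH e), Inr (oK (sigma e)))"
  unfolding sum3_g_def by simp

lemma gG_Inl_inner: "\<not> incident gH e u \<Longrightarrow> gG (Inl e) = map_prod Inl Inl (gH e)"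
  unfolding sum3_g_def by simp

lemma gG_Inr: "gG (Inr f) = map_prod Inr Inr (gK f)"
  unfolding sum3_g_def by simp

lemma EG_Inl [simp]: "Inl e \<in> EG \<longleftrightarrow> e \<in> EH"
  and EG_Inr [simp]: "Inr f \<in> EG \<longleftrightarrow> f \<in> inner_K"
  and VG_Inl [simp]: "Inl x \<in> VG \<longleftrightarrow> x \<in> VH - {u}"
  and VG_Inr [simp]: "Inr y \<in> VG \<longleftrightarrow> y \<in> VK - {v}"
  unfolding sum3_E_def sum3_V_def by auto

lemma finite_G: "finite VG" "finite EG"
  unfolding sum3_V_def sum3_E_def using finite_H K.finite by auto

lemma G_edge_ends:
  assumes "z \<in> EG"
  shows "fst (gG z) \<in> VG \<and> snd (gG z) \<in> VG \<and> fst (gG z) \<noteq> snd (gG z)"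
proof (cases z)
  case (Inl e)
  show ?thesis
  proof (cases "incident gH e u")
    case True
    then have "oH e \<in> VH - {u}" "oK (sigma e) \<in> U"
      using assms Inl cut_H_ends cut_K_ends[OF sigma_cut] by auto
    then show ?thesis
      using Inl True gG_Inl_cut v_notin_U K.U_subset by auto
  next
    case False
    then show ?thesis
      using assms Inl gG_Inl_inner inner_H_ends[of e] H_loopless by (cases "gH e") auto
  qed
next
  case (Inr f)
  then show ?thesis
    using assms gG_Inr[of f] inner_K_ends[of f] K_loopless by (cases "gK f") auto
qed

text \<open>Contracting H - u to the single vertex v turns G back into K; K_vertex and K_edge
  describe this contraction on the vertices and on the edges meeting K - v.\<close>
definition K_vertex :: "'a + 'b \<Rightarrow> 'b" where
  "K_vertex p = (case p of Inl _ \<Rightarrow> v | Inr y \<Rightarrow> y)"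

definition K_edge :: "'e + 'f \<Rightarrow> 'f" where
  "K_edge z = (case z of Inl e \<Rightarrow> sigma e | Inr f \<Rightarrow> f)"

abbreviation "K_side \<equiv> Inl ` cut_H \<union> Inr ` inner_K"

definition H_part :: "('e + 'f) set \<Rightarrow> 'e set" where
  "H_part M = {e\<in>EH. Inl e \<in> M}"

definition K_part :: "('e + 'f) set \<Rightarrow> 'f set" where
  "K_part M = K_edge ` (M \<inter> K_side)"

lemma bij_K_edge: "bij_betw K_edge K_side EK"
proof -
  have "inj_on K_edge (Inl ` cut_H)"
    using sigma unfolding bij_betw_def inj_on_def K_edge_def by auto
  moreover have "inj_on K_edge (Inr ` inner_K)"
    unfolding inj_on_def K_edge_def by auto
  moreover have "K_edge ` Inl ` cut_H = cut_K"
    using sigma unfolding bij_betw_def K_edge_def by (simp add: image_image)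
  moreover have "K_edge ` Inr ` inner_K = inner_K"
    unfolding K_edge_def by (simp add: image_image)
  moreover have "cut_K \<union> inner_K = EK"
    by auto
  ultimately show ?thesis
    unfolding bij_betw_def by (auto simp: inj_on_Un image_Un)
qed

lemma incident_Inl_iff:
  assumes "z \<in> EG" "x \<in> VH - {u}"
  shows "incident gG z (Inl x) \<longleftrightarrow> (\<exists>e. z = Inl e \<and> incident gH e x)"
proof (cases z)
  case (Inl e)
  show ?thesis
  proof (cases "incident gH e u")
    case True
    obtain w where w: "oH e = w" "gH e = (u, w) \<or> gH e = (w, u)"
      using assms Inl True cut_H_ends by auto
    have "incident gG z (Inl x) \<longleftrightarrow> w = x"
      using Inl gG_Inl_cut[OF True] w(1) unfolding incident_def by auto
    moreover have "incident gH e x \<longleftrightarrow> w = x"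
      using w(2) assms(2) unfolding incident_def by auto
    ultimately show ?thesis
      using Inl by auto
  next
    case False
    then show ?thesis
      using Inl gG_Inl_inner[OF False] unfolding incident_def by (cases "gH e") auto
  qed
next
  case (Inr f)
  then show ?thesis
    using gG_Inr[of f] unfolding incident_def by (cases "gK f") auto
qed

lemma incident_Inr_iff:
  assumes "z \<in> EG" "y \<in> VK - {v}"
  shows "incident gG z (Inr y) \<longleftrightarrow> z \<in> K_side \<and> incident gK (K_edge z) y"
proof (cases z)
  case (Inl e)
  show ?thesis
  proof (cases "incident gH e u")
    case True
    obtain w where w: "oK (sigma e) = w" "gK (sigma e) = (v, w) \<or> gK (sigma e) = (w, v)"
      using assms Inl True cut_K_ends[OF sigma_cut] by auto
    have "incident gG z (Inr y) \<longleftrightarrow> w = y"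
      using Inl gG_Inl_cut[OF True] w(1) unfolding incident_def by auto
    moreover have "incident gK (K_edge z) y \<longleftrightarrow> w = y"
      using Inl w(2) assms(2) unfolding incident_def K_edge_def by auto
    ultimately show ?thesis
      using Inl True assms(1) by auto
  next
    case False
    then show ?thesis
      using Inl gG_Inl_inner[OF False] unfolding incident_def by (cases "gH e") auto
  qed
next
  case (Inr f)
  then have "z \<in> K_side"
    using assms(1) by auto
  then show ?thesis
    using Inr gG_Inr[of f] unfolding incident_def K_edge_def by (cases "gK f") auto
qed

lemma card_incident_Inl:
  assumes M: "M \<subseteq> EG" and x: "x \<in> VH - {u}"
  shows "card {z\<in>M. incident gG z (Inl x)} = card {e\<in>H_part M. incident gH e x}"
proof -
  have "z \<in> Inl ` {e\<in>H_part M. incident gH e x} \<longleftrightarrow> z \<in> M \<and> incident gG z (Inl x)" for z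
  proof (cases "z \<in> M")
    case True
    then have "z \<in> EG"
      using M by auto
    then show ?thesis
      using True incident_Inl_iff[OF _ x, of z] unfolding H_part_def by auto
  qed (auto simp: H_part_def)
  then have "{z\<in>M. incident gG z (Inl x)} = Inl ` {e\<in>H_part M. incident gH e x}"
    by blast
  then show ?thesis
    by (simp add: card_image)
qed

lemma card_incident_Inr:
  assumes M: "M \<subseteq> EG" and y: "y \<in> VK - {v}"
  shows "card {z\<in>M. incident gG z (Inr y)} = card {f\<in>K_part M. incident gK f y}"
proof -
  let ?Z = "{z\<in>M. incident gG z (Inr y)}"
  have "incident gG z (Inr y) \<longleftrightarrow> z \<in> K_side \<and> incident gK (K_edge z) y" if "z \<in> M" for z
    using that M incident_Inr_iff[OF _ y, of z] by auto
  then have Z: "?Z = {z\<in>M \<inter> K_side. incident gK (K_edge z) y}"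
    by auto
  have "{f\<in>K_part M. incident gK f y} = K_edge ` {z\<in>M \<inter> K_side. incident gK (K_edge z) y}"
    unfolding K_part_def by auto
  then have "{f\<in>K_part M. incident gK f y} = K_edge ` ?Z"
    unfolding Z .
  moreover have "inj_on K_edge ?Z"
  proof (rule inj_on_subset)
    show "inj_on K_edge K_side"
      using bij_K_edge unfolding bij_betw_def ..
    show "?Z \<subseteq> K_side"
      unfolding Z by auto
  qed
  ultimately show ?thesis
    by (simp add: card_image)
qed

lemma K_part_eq: "K_part M = sigma ` {e\<in>cut_H. Inl e \<in> M} \<union> {f\<in>inner_K. Inr f \<in> M}"
proof -
  have "M \<inter> K_side = Inl ` {e\<in>cut_H. Inl e \<in> M} \<union> Inr ` {f\<in>inner_K. Inr f \<in> M}"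
    by auto
  then show ?thesis
    unfolding K_part_def by (simp add: image_Un image_image K_edge_def)
qed

lemma card_incident_u_v:
  "card {e\<in>H_part M. incident gH e u} = card {f\<in>K_part M. incident gK f v}"
proof -
  have "{f\<in>K_part M. incident gK f v} = sigma ` {e\<in>cut_H. Inl e \<in> M}"
    using sigma_cut unfolding K_part_eq by auto
  also have "{e\<in>cut_H. Inl e \<in> M} = {e\<in>H_part M. incident gH e u}"
    unfolding H_part_def by auto
  finally have "{f\<in>K_part M. incident gK f v} = sigma ` {e\<in>H_part M. incident gH e u}" .
  moreover have "inj_on sigma {e\<in>H_part M. incident gH e u}"
    using sigma unfolding bij_betw_def H_part_def by (auto intro: inj_on_subset)
  ultimately show ?thesis
    by (simp add: card_image)
qed

lemma H_part_EG: "H_part EG = EH"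
  unfolding H_part_def by simp

lemma K_part_EG: "K_part EG = EK"
proof -
  have "EG \<inter> K_side = K_side"
    unfolding sum3_E_def by auto
  then show ?thesis
    using bij_K_edge unfolding K_part_def bij_betw_def by simp
qed

lemma cubic_G: "cubic VG EG gG"
  unfolding cubic_def wf_graph_def
proof (intro conjI ballI)
  show "finite VG" "finite EG"
    by (fact finite_G)+
next
  fix z assume "z \<in> EG"
  then show "fst (gG z) \<in> VG" "snd (gG z) \<in> VG"
    using G_edge_ends by auto
next
  fix p assume p: "p \<in> VG"
  have deg_G: "deg VG EG gG p = card {z\<in>EG. incident gG z p}"
    using G_edge_ends by (intro deg_eq_card_incident[OF finite_G(2)]) auto
  show "deg VG EG gG p = 3"
  proof (cases p)
    case (Inl x)
    then have "deg VG EG gG p = deg VH EH gH x"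
      using deg_G p card_incident_Inl[of EG x] H_part_EG
        deg_eq_card_incident[OF finite_H(2) H_loopless] by simp
    then show ?thesis
      using H_cubic p Inl unfolding cubic_def by auto
  next
    case (Inr y)
    then have "deg VG EG gG p = deg VK EK gK y"
      using deg_G p card_incident_Inr[of EG y] K_part_EG
        deg_eq_card_incident[OF K.finite(2) K_loopless] by simp
    then show ?thesis
      using K_cubic p Inr unfolding cubic_def by auto
  qed
qed

text \<open>By the counting argument in K, the image of M in K covers v exactly once as well, that is,
  M meets the 3-edge-cut exactly once.\<close>
lemma perfect_matching_H_part:
  assumes M: "perfect_matching VG EG gG M"
  shows "perfect_matching VH EH gH (H_part M)"
proof -
  have MG: "M \<subseteq> EG" and one: "\<And>p. p \<in> VG \<Longrightarrow> card {z\<in>M. incident gG z p} = 1"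
    using M unfolding perfect_matching_def by auto
  have "K_part M \<subseteq> EK"
    using bij_K_edge unfolding K_part_def bij_betw_def by auto
  moreover have "card {f\<in>K_part M. incident gK f y} = 1" if "y \<in> VK - {v}" for y
    using one[of "Inr y"] card_incident_Inr[OF MG that] that by simp
  ultimately have "card {f\<in>K_part M. incident gK f v} = 1"
    by (rule K.card_incident_trivial_component[OF v_component])
  then have "card {e\<in>H_part M. incident gH e x} = 1" if "x \<in> VH" for x
    using one[of "Inl x"] card_incident_Inl[OF MG, of x] card_incident_u_v that
    by (cases "x = u") auto
  then show ?thesis
    using H_loopless unfolding perfect_matching_def H_part_def by auto
qed

lemma pm_index_H_le_G: "pm_index VH EH gH \<le> pm_index VG EG gG"
proof (rule pm_index_le_pullback[OF finite_G(2)])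
  show "Inl ` EH \<subseteq> EG"
    by auto
qed (use perfect_matching_H_part in \<open>simp add: H_part_def\<close>)

abbreviation "WG \<equiv> VG - Inr ` U"
abbreviation "H_block \<equiv> (Inl ` (VH - {u}) :: ('a + 'b) set)"

lemma H_block_nonempty: "\<exists>x. x \<in> VH - {u}"
proof -
  have "\<not> VH \<subseteq> {u}"
    using H_two_connected card_mono[of "{u}" VH] unfolding two_connected_def by auto
  then show ?thesis
    by blast
qed

lemma rtrancl_adj_rel_Inl:
  assumes "(a, b) \<in> (adj_rel W F gH)\<^sup>*" "W \<subseteq> VH - {u}" "Inl ` W \<subseteq> W'" "Inl ` F \<subseteq> F'"
  shows "(Inl a, Inl b) \<in> (adj_rel W' F' gG)\<^sup>*"
proof (rule rtrancl_adj_rel_map[OF assms(1,3)])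
  fix e assume e: "e \<in> F" "fst (gH e) \<in> W" "snd (gH e) \<in> W"
  then have "\<not> incident gH e u"
    using assms(2) unfolding incident_def by auto
  then show "\<exists>e'\<in>F'. gG e' = map_prod Inl Inl (gH e)"
    using e(1) assms(4) gG_Inl_inner by blast
qed

lemma rtrancl_adj_rel_Inr:
  assumes "(a, b) \<in> (adj_rel W F gK)\<^sup>*" "W \<subseteq> VK - {v}" "Inr ` W \<subseteq> W'"
    "Inr ` {f\<in>F. \<not> incident gK f v} \<subseteq> F'"
  shows "(Inr a, Inr b) \<in> (adj_rel W' F' gG)\<^sup>*"
proof (rule rtrancl_adj_rel_map[OF assms(1,3)])
  fix f assume f: "f \<in> F" "fst (gK f) \<in> W" "snd (gK f) \<in> W"
  then have "\<not> incident gK f v"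
    using assms(2) unfolding incident_def by auto
  then show "\<exists>e'\<in>F'. gG e' = map_prod Inr Inr (gK f)"
    using f(1) assms(4) gG_Inr by blast
qed

lemma rtrancl_K_side:
  assumes "Inr ` (VK - {v}) \<subseteq> W'" "Inr ` inner_K \<subseteq> F'" "y \<in> VK - {v}" "y' \<in> VK - {v}"
  shows "(Inr y, Inr y') \<in> (adj_rel W' F' gG)\<^sup>*"
proof -
  have "connected_on (VK - {v}) EK gK"
    using K_two_connected v unfolding two_connected_def by blast
  then have "(y, y') \<in> (adj_rel (VK - {v}) EK gK)\<^sup>*"
    using assms(3,4) unfolding connected_on_def by blast
  then show ?thesis
    by (rule rtrancl_adj_rel_Inr) (use assms(1,2) in auto)
qed

lemma rtrancl_H_block:
  assumes "Inl ` (VH - {u}) \<subseteq> W'" "Inl ` EH \<subseteq> F'" "x \<in> VH - {u}" "x' \<in> VH - {u}"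
  shows "(Inl x, Inl x') \<in> (adj_rel W' F' gG)\<^sup>*"
proof -
  have "connected_on (VH - {u}) EH gH"
    using H_two_connected u unfolding two_connected_def by blast
  then have "(x, x') \<in> (adj_rel (VH - {u}) EH gH)\<^sup>*"
    using assms(3,4) unfolding connected_on_def by blast
  then show ?thesis
    by (rule rtrancl_adj_rel_Inl) (use assms(1,2) in auto)
qed

text \<open>A cut edge has an end in U, so G - U has no edges between the two sides.\<close>
lemma adj_rel_WG_cases:
  assumes "(p, q) \<in> adj_rel WG EG gG"
  shows "(\<exists>a b. p = Inl a \<and> q = Inl b) \<or> (\<exists>a b. p = Inr a \<and> q = Inr b \<and> (a, b) \<in> adj_rel (VK - U) EK gK)"
proof -
  obtain z where z: "z \<in> EG" "gG z = (p, q) \<or> gG z = (q, p)" "p \<in> WG" "q \<in> WG"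
    using assms unfolding adj_rel_def by auto
  show ?thesis
  proof (cases z)
    case (Inl e)
    have "\<not> incident gH e u"
    proof
      assume "incident gH e u"
      then have "oK (sigma e) \<in> U"
        using z(1) Inl cut_K_ends[OF sigma_cut] by auto
      then show False
        using z Inl gG_Inl_cut[OF \<open>incident gH e u\<close>] by auto
    qed
    then show ?thesis
      using z(2) Inl gG_Inl_inner by (cases "gH e") auto
  next
    case (Inr f)
    then have "f \<in> EK"
      using z(1) by simp
    obtain a b where ab: "gK f = (a, b)"
      by fastforce
    then have "a \<in> VK" "b \<in> VK"
      using K.ends_in_V[OF \<open>f \<in> EK\<close>] by auto
    then show ?thesis
      using z Inr gG_Inr[of f] ab \<open>f \<in> EK\<close> unfolding adj_rel_def by auto
  qed
qed

lemma rtrancl_WG_Inl: "(Inl a, q) \<in> (adj_rel WG EG gG)\<^sup>* \<Longrightarrow> \<exists>b. q = Inl b"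
  by (induction q rule: rtrancl_induct) (auto dest: adj_rel_WG_cases)

lemma rtrancl_WG_Inr:
  "(Inr a, q) \<in> (adj_rel WG EG gG)\<^sup>* \<Longrightarrow> \<exists>b. q = Inr b \<and> (a, b) \<in> (adj_rel (VK - U) EK gK)\<^sup>*"
proof (induction q rule: rtrancl_induct)
  case base
  then show ?case
    by simp
next
  case (step q r)
  then obtain b c where "(a, b) \<in> (adj_rel (VK - U) EK gK)\<^sup>*" "r = Inr c"
    "(b, c) \<in> adj_rel (VK - U) EK gK"
    using adj_rel_WG_cases by blast
  moreover from this(1,3) have "(a, c) \<in> (adj_rel (VK - U) EK gK)\<^sup>*"
    by (rule rtrancl_into_rtrancl)
  ultimately show ?case
    by blast
qed

lemma adj_rel_K_avoids_v: "adj_rel (VK - U) EK gK = adj_rel (VK - U - {v}) EK gK"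
proof -
  have "v \<noteq> p \<and> v \<noteq> q" if "(p, q) \<in> adj_rel (VK - U) EK gK" for p q
  proof -
    have "(v, w) \<notin> adj_rel (VK - U) EK gK" for w
    proof
      assume vw: "(v, w) \<in> adj_rel (VK - U) EK gK"
      then have "w \<in> component (VK - U) EK gK v"
        unfolding component_def adj_rel_def by auto
      then have "w = v"
        using component_v by simp
      then show False
        using vw K_loopless unfolding adj_rel_def by auto
    qed
    moreover have "(q, p) \<in> adj_rel (VK - U) EK gK"
      using that adj_rel_sym[of "VK - U" EK gK] unfolding sym_def by blast
    ultimately show ?thesis
      using that by blast
  qed
  then show ?thesis
    unfolding adj_rel_def by auto
qed

lemma component_WG_Inl:
  assumes a: "a \<in> VH - {u}"
  shows "component WG EG gG (Inl a) = H_block"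
proof
  show "component WG EG gG (Inl a) \<subseteq> H_block"
    using rtrancl_WG_Inl unfolding component_def by fastforce
  show "H_block \<subseteq> component WG EG gG (Inl a)"
  proof
    fix q :: "'a + 'b" assume "q \<in> H_block"
    then obtain b where b: "q = Inl b" "b \<in> VH - {u}"
      by auto
    have "(Inl a, Inl b) \<in> (adj_rel WG EG gG)\<^sup>*"
      using a b by (intro rtrancl_H_block) auto
    then show "q \<in> component WG EG gG (Inl a)"
      unfolding component_def using b by auto
  qed
qed

lemma component_WG_Inr:
  assumes a: "a \<in> VK - U - {v}"
  shows "component WG EG gG (Inr a) = Inr ` component (VK - U) EK gK a"
proof
  show "component WG EG gG (Inr a) \<subseteq> Inr ` component (VK - U) EK gK a"
  proof
    fix q assume q: "q \<in> component WG EG gG (Inr a)"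
    then obtain b where b: "q = Inr b" "(a, b) \<in> (adj_rel (VK - U) EK gK)\<^sup>*"
      using rtrancl_WG_Inr unfolding component_def by blast
    then show "q \<in> Inr ` component (VK - U) EK gK a"
      using rtrancl_adj_rel_in[OF b(2)] a unfolding component_def by auto
  qed
  show "Inr ` component (VK - U) EK gK a \<subseteq> component WG EG gG (Inr a)"
  proof
    fix q :: "'a + 'b" assume "q \<in> Inr ` component (VK - U) EK gK a"
    then obtain b where b: "q = Inr b" "(a, b) \<in> (adj_rel (VK - U - {v}) EK gK)\<^sup>*"
      unfolding component_def adj_rel_K_avoids_v by auto
    from b(2) have "(Inr a, Inr b) \<in> (adj_rel WG EG gG)\<^sup>*"
      by (rule rtrancl_adj_rel_Inr) (use v_notin_U in auto)
    moreover have "b \<in> VK - U - {v}"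
      using rtrancl_adj_rel_in[OF b(2)] a by auto
    ultimately show "q \<in> component WG EG gG (Inr a)"
      unfolding component_def using b by auto
  qed
qed

lemma components_K_minus_v: "K.Cs - {{v}} = component (VK - U) EK gK ` (VK - U - {v})"
proof
  show "component (VK - U) EK gK ` (VK - U - {v}) \<subseteq> K.Cs - {{v}}"
    using component_self[of _ "VK - U" EK gK] unfolding components_def by fastforce
  show "K.Cs - {{v}} \<subseteq> component (VK - U) EK gK ` (VK - U - {v})"
    using component_v unfolding components_def by blast
qed

lemma components_WG: "components WG EG gG = insert H_block ((\<lambda>C. Inr ` C) ` (K.Cs - {{v}}))"
proof -
  have "WG = Inl ` (VH - {u}) \<union> Inr ` (VK - U - {v})"
    unfolding sum3_V_def by auto
  then have "components WG EG gG
      = component WG EG gG ` Inl ` (VH - {u}) \<union> component WG EG gG ` Inr ` (VK - U - {v})"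
    unfolding components_def by (simp add: image_Un)
  also have "component WG EG gG ` Inl ` (VH - {u}) = {H_block}"
    using component_WG_Inl H_block_nonempty by (auto simp: image_image)
  also have "component WG EG gG ` Inr ` (VK - U - {v}) = (\<lambda>C. Inr ` C) ` (K.Cs - {{v}})"
    unfolding components_K_minus_v image_image using component_WG_Inr by (intro image_cong) auto
  finally show ?thesis
    by simp
qed

text \<open>block X is the vertex of the contraction of G corresponding to the vertex X of the
  contraction of K.\<close>
definition block :: "'b set \<Rightarrow> ('a + 'b) set" where
  "block X = (if X = {v} then H_block else Inr ` X)"

abbreviation "contr_G \<equiv> contr_class VG EG gG (Inr ` U)"

lemma K_vertex_ends:
  assumes "z \<in> K_side"
  shows "map_prod K_vertex K_vertex (gG z) = gK (K_edge z)
    \<or> map_prod K_vertex K_vertex (gG z) = prod.swap (gK (K_edge z))"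
proof (cases z)
  case (Inl e)
  then have "e \<in> cut_H"
    using assms by auto
  then obtain w where "oK (sigma e) = w" "gK (sigma e) = (v, w) \<or> gK (sigma e) = (w, v)"
    using cut_K_ends[OF sigma_cut] by blast
  then show ?thesis
    using Inl gG_Inl_cut[of e] \<open>e \<in> cut_H\<close> unfolding K_vertex_def K_edge_def by auto
next
  case (Inr f)
  then show ?thesis
    using gG_Inr[of f] unfolding K_vertex_def K_edge_def by (cases "gK f") auto
qed

lemma contr_G_eq:
  assumes "p \<in> VG"
  shows "contr_G p = block (K.contr (K_vertex p))"
proof (cases p)
  case (Inl a)
  then have "contr_G p = H_block"
    using assms component_WG_Inl[of a] unfolding contr_class_def by auto
  moreover have "K.contr v = {v}"
    using v_notin_U component_v unfolding contr_class_def by simp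
  ultimately show ?thesis
    using Inl unfolding K_vertex_def block_def by simp
next
  case (Inr y)
  show ?thesis
  proof (cases "y \<in> U")
    case True
    then show ?thesis
      using Inr assms unfolding contr_class_def K_vertex_def block_def by auto
  next
    case False
    then have "y \<in> component (VK - U) EK gK y"
      using Inr assms by (auto intro: component_self)
    then show ?thesis
      using Inr assms False component_WG_Inr[of y] unfolding contr_class_def K_vertex_def block_def
      by auto
  qed
qed

lemma inj_block: "inj block"
proof (rule injI)
  fix X Y assume eq: "block X = block Y"
  obtain x where x: "x \<in> VH - {u}"
    using H_block_nonempty by blast
  have "H_block \<noteq> Inr ` Z" "Inr ` Z \<noteq> H_block" for Z
    using x by auto
  then show "X = Y"
    using eq unfolding block_def by (auto split: if_splits simp: inj_image_eq_iff)
qed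

lemma block_singletons: "block ` (\<lambda>x. {x}) ` U = (\<lambda>x. {x}) ` (Inr ` U)"
  using v_notin_U unfolding block_def by (force simp: image_image)

lemma block_components: "block ` K.Cs = components WG EG gG"
proof -
  have "K.Cs = insert {v} (K.Cs - {{v}})"
    using v_component by auto
  then have "block ` K.Cs = insert (block {v}) (block ` (K.Cs - {{v}}))"
    by (metis image_insert)
  also have "block ` (K.Cs - {{v}}) = (\<lambda>C. Inr ` C) ` (K.Cs - {{v}})"
    unfolding block_def by (intro image_cong) auto
  finally show ?thesis
    using components_WG unfolding block_def by simp
qed

lemma contr_ends_G:
  assumes z: "z \<in> K_side"
  shows "contr_ends VG EG gG (Inr ` U) z = map_prod block block (contr_ends VK EK gK U (K_edge z))
    \<or> contr_ends VG EG gG (Inr ` U) z = prod.swap (map_prod block block (contr_ends VK EK gK U (K_edge z)))"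
proof -
  obtain a b where ab: "gG z = (a, b)"
    by fastforce
  moreover have "a \<in> VG" "b \<in> VG"
    using z G_edge_ends[of z] ab by auto
  ultimately have "contr_ends VG EG gG (Inr ` U) z
      = (block (K.contr (K_vertex a)), block (K.contr (K_vertex b)))"
    using contr_G_eq unfolding contr_ends_def by simp
  then show ?thesis
    using K_vertex_ends[OF z] ab unfolding contr_ends_def by (cases "gK (K_edge z)") auto
qed

lemma contr_edges_G: "contr_edges VG EG gG (Inr ` U) = {z\<in>K_side. K_edge z \<in> contr_edges VK EK gK U}"
proof -
  have "z \<in> contr_edges VG EG gG (Inr ` U) \<longleftrightarrow> z \<in> K_side \<and> K_edge z \<in> contr_edges VK EK gK U"
    if z: "z \<in> EG" for z
  proof (cases "z \<in> K_side")
    case True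
    obtain a b where ab: "gG z = (a, b)"
      by fastforce
    then have "a \<in> VG" "b \<in> VG"
      using G_edge_ends[OF z] by auto
    then have "contr_G a \<noteq> contr_G b \<longleftrightarrow> K.contr (K_vertex a) \<noteq> K.contr (K_vertex b)"
      using contr_G_eq inj_block by (simp add: inj_eq)
    also have "\<dots> \<longleftrightarrow> K.contr (fst (gK (K_edge z))) \<noteq> K.contr (snd (gK (K_edge z)))"
      using K_vertex_ends[OF True] ab by (cases "gK (K_edge z)") auto
    finally show ?thesis
      using True z ab bij_K_edge unfolding contr_edges_def bij_betw_def by auto
  next
    case False
    then obtain e where e: "z = Inl e" "e \<in> EH" "\<not> incident gH e u"
      using z by (cases z) auto
    then have "contr_G (fst (gG z)) = H_block" "contr_G (snd (gG z)) = H_block"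
      using gG_Inl_inner[of e] inner_H_ends[of e] contr_G_eq K_vertex_def block_def
        component_WG_Inl unfolding contr_class_def by (cases "gH e"; auto)+
    then show ?thesis
      using False unfolding contr_edges_def by simp
  qed
  moreover have "contr_edges VG EG gG (Inr ` U) \<subseteq> EG" "K_side \<subseteq> EG"
    unfolding contr_edges_def by auto
  ultimately show ?thesis
    by blast
qed

lemma graph_iso_contractions:
  "graph_iso K_edge block ((\<lambda>x. {x}) ` U \<union> K.Cs) (contr_edges VK EK gK U) (contr_ends VK EK gK U)
     ((\<lambda>x. {x}) ` (Inr ` U) \<union> components WG EG gG) (contr_edges VG EG gG (Inr ` U))
     (contr_ends VG EG gG (Inr ` U))"
  unfolding graph_iso_def
proof (intro conjI ballI)
  have "contr_edges VK EK gK U \<subseteq> K_edge ` K_side"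
    using bij_K_edge unfolding bij_betw_def contr_edges_def by auto
  then show "bij_betw K_edge (contr_edges VG EG gG (Inr ` U)) (contr_edges VK EK gK U)"
    unfolding contr_edges_G by (intro bij_betw_subset[OF bij_K_edge]) auto
  show "inj_on block ((\<lambda>x. {x}) ` U \<union> K.Cs)"
    using inj_block by (rule inj_on_subset) simp
  show "block ` ((\<lambda>x. {x}) ` U \<union> K.Cs) = (\<lambda>x. {x}) ` (Inr ` U) \<union> components WG EG gG"
    by (simp add: image_Un block_singletons block_components)
next
  fix z assume "z \<in> contr_edges VG EG gG (Inr ` U)"
  then show "contr_ends VG EG gG (Inr ` U) z = map_prod block block (contr_ends VK EK gK U (K_edge z))
    \<or> contr_ends VG EG gG (Inr ` U) z = prod.swap (map_prod block block (contr_ends VK EK gK U (K_edge z)))"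
    unfolding contr_edges_G by (intro contr_ends_G) simp
qed

lemma bipartising_set_G: "bipartising_set VG EG gG (Inr ` U)"
  unfolding bipartising_set_def
proof (intro conjI ballI)
  show "Inr ` U \<subseteq> VG"
    using K.U_subset v_notin_U by auto
  show "2 \<le> card (Inr ` U :: ('a + 'b) set)"
    using K.card_U by (simp add: card_image)
next
  fix z assume z: "z \<in> EG"
  show "\<not> (fst (gG z) \<in> Inr ` U \<and> snd (gG z) \<in> Inr ` U)"
  proof (cases z)
    case (Inl e)
    then show ?thesis
      using gG_Inl_cut[of e] gG_Inl_inner[of e] by (cases "incident gH e u"; cases "gH e") auto
  next
    case (Inr f)
    then show ?thesis
      using z gG_Inr[of f] K.U_independent[of f] by (cases "gK f") auto
  qed
next
  show "cubic ((\<lambda>x. {x}) ` (Inr ` U) \<union> components WG EG gG) (contr_edges VG EG gG (Inr ` U))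
     (contr_ends VG EG gG (Inr ` U))"
    by (rule cubic_graph_iso[OF graph_iso_contractions K.contraction_cubic])
  have "bipartite_with ((\<lambda>x. {x}) ` (Inr ` U) \<union> components WG EG gG) (contr_edges VG EG gG (Inr ` U))
     (contr_ends VG EG gG (Inr ` U)) (block ` (\<lambda>x. {x}) ` U) (block ` K.Cs)"
    by (rule bipartite_with_graph_iso[OF graph_iso_contractions K.contraction_bipartite])
  then show "bipartite_with ((\<lambda>x. {x}) ` (Inr ` U) \<union> components WG EG gG) (contr_edges VG EG gG (Inr ` U))
     (contr_ends VG EG gG (Inr ` U)) ((\<lambda>x. {x}) ` (Inr ` U)) (components WG EG gG)"
    by (simp only: block_singletons block_components)
qed

lemma U_nonempty: "\<exists>r. r \<in> U"
  using K.card_U by (metis card.empty ex_in_conv not_numeral_le_zero)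

lemma cut_edge_adj:
  assumes "e \<in> cut_H" "Inl (oH e) \<in> W'" "Inr (oK (sigma e)) \<in> W'" "Inl e \<in> F'"
  shows "(Inl (oH e), Inr (oK (sigma e))) \<in> adj_rel W' F' gG"
  using assms gG_Inl_cut[of e] unfolding adj_rel_def by auto

text \<open>If every vertex of the H-side of a subgraph of G can reach u in H, it leaves through
  a cut edge into the intact K-side, which is connected since K - v is.\<close>
lemma connected_through_K:
  assumes W': "W' \<subseteq> VG" "Inr ` (VK - {v}) \<subseteq> W'" and F': "Inr ` inner_K \<subseteq> F'"
    and H_side: "Inl ` (WH - {u}) \<subseteq> W'" "FH \<subseteq> EH" "Inl ` FH \<subseteq> F'"
    and reach: "\<And>x. Inl x \<in> W' \<Longrightarrow> (x, u) \<in> (adj_rel WH FH gH)\<^sup>*"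
  shows "connected_on W' F' gG"
proof -
  obtain r where "r \<in> U"
    using U_nonempty by blast
  then have r: "r \<in> VK - {v}"
    using K.U_subset v_notin_U by auto
  have K_reach: "(Inr y, Inr r) \<in> (adj_rel W' F' gG)\<^sup>*" if "y \<in> VK - {v}" for y
    using rtrancl_K_side[OF W'(2) F' that r] .
  show ?thesis
  proof (rule connected_onI_hub)
    fix p assume p: "p \<in> W'"
    show "(p, Inr r) \<in> (adj_rel W' F' gG)\<^sup>*"
    proof (cases p)
      case (Inr y)
      then show ?thesis
        using p W' K_reach by auto
    next
      case (Inl x)
      then have "x \<noteq> u"
        using p W' by auto
      have "(x, u) \<in> (adj_rel WH FH gH)\<^sup>*"
        using reach p Inl by simp
      then obtain z e where z: "z \<in> WH - {u}" "e \<in> FH" "gH e = (z, u) \<or> gH e = (u, z)"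
        "(x, z) \<in> (adj_rel (WH - {u}) FH gH)\<^sup>*"
        using \<open>x \<noteq> u\<close> by (rule rtrancl_adj_rel_last_edge)
      have "Inl ` (WH - {u}) \<subseteq> VG"
        using H_side(1) W'(1) by auto
      then have "WH - {u} \<subseteq> VH - {u}"
        by auto
      then have path_H: "(Inl x, Inl z) \<in> (adj_rel W' F' gG)\<^sup>*"
        using z(4) H_side by (intro rtrancl_adj_rel_Inl) auto
      have e: "e \<in> cut_H" "oH e = z"
        using z(1-3) H_side(2) other_end_eq[of gH e z u] by auto
      define w where "w = oK (sigma e)"
      have w: "w \<in> VK - {v}"
        using cut_K_ends[OF sigma_cut[OF e(1)]] K.U_subset v_notin_U unfolding w_def by auto
      moreover have "Inl z \<in> W'" "Inl e \<in> F'"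
        using z(1,2) H_side by auto
      ultimately have cut: "(Inl z, Inr w) \<in> adj_rel W' F' gG"
        using cut_edge_adj[OF e(1)] W'(2) e(2) unfolding w_def by auto
      show ?thesis
        using rtrancl_trans[OF rtrancl_into_rtrancl[OF path_H cut] K_reach[OF w]] Inl by simp
    qed
  qed
qed

lemma connected_through_H:
  assumes W': "W' \<subseteq> VG" "Inl ` (VH - {u}) \<subseteq> W'" and F': "Inl ` EH \<subseteq> F'"
    and K_side: "Inr ` (WK - {v}) \<subseteq> W'" "FK \<subseteq> EK" "Inr ` {f\<in>FK. \<not> incident gK f v} \<subseteq> F'"
    and reach: "\<And>y. Inr y \<in> W' \<Longrightarrow> (y, v) \<in> (adj_rel WK FK gK)\<^sup>*"
  shows "connected_on W' F' gG"
proof -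
  obtain h where h: "h \<in> VH - {u}"
    using H_block_nonempty by blast
  have H_reach: "(Inl x, Inl h) \<in> (adj_rel W' F' gG)\<^sup>*" if "x \<in> VH - {u}" for x
    using rtrancl_H_block[OF W'(2) F' that h] .
  show ?thesis
  proof (rule connected_onI_hub)
    fix p assume p: "p \<in> W'"
    show "(p, Inl h) \<in> (adj_rel W' F' gG)\<^sup>*"
    proof (cases p)
      case (Inl x)
      then show ?thesis
        using p W' H_reach by auto
    next
      case (Inr y)
      then have "y \<noteq> v"
        using p W' by auto
      have "(y, v) \<in> (adj_rel WK FK gK)\<^sup>*"
        using reach p Inr by simp
      then obtain z f where z: "z \<in> WK - {v}" "f \<in> FK" "gK f = (z, v) \<or> gK f = (v, z)"
        "(y, z) \<in> (adj_rel (WK - {v}) FK gK)\<^sup>*"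
        using \<open>y \<noteq> v\<close> by (rule rtrancl_adj_rel_last_edge)
      have "Inr ` (WK - {v}) \<subseteq> VG"
        using K_side(1) W'(1) by auto
      then have "WK - {v} \<subseteq> VK - {v}"
        by auto
      then have path_K: "(Inr y, Inr z) \<in> (adj_rel W' F' gG)\<^sup>*"
        using z(4) K_side by (intro rtrancl_adj_rel_Inr) auto
      have f: "oK f = z" "incident gK f v"
        using z(1,3) other_end_eq[of gK f z v] by auto
      then have "f \<in> sigma ` cut_H"
        using z(2) K_side(2) sigma unfolding bij_betw_def by auto
      then obtain e where e: "e \<in> cut_H" "sigma e = f"
        by blast
      define w where "w = oH e"
      have w: "w \<in> VH - {u}"
        using cut_H_ends[OF e(1)] unfolding w_def by auto
      moreover have "Inr z \<in> W'" "Inl e \<in> F'"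
        using z(1) K_side(1) e(1) F' by auto
      ultimately have "(Inl w, Inr z) \<in> adj_rel W' F' gG"
        using cut_edge_adj[OF e(1)] W'(2) e(2) f(1) unfolding w_def by auto
      then have cut: "(Inr z, Inl w) \<in> adj_rel W' F' gG"
        by (rule symD[OF adj_rel_sym])
      show ?thesis
        using rtrancl_trans[OF rtrancl_into_rtrancl[OF path_K cut] H_reach[OF w]] Inr by simp
    qed
  qed
qed

lemma two_connected_G: "two_connected VG EG gG"
  unfolding two_connected_def
proof (intro conjI ballI)
  show "wf_graph VG EG gG"
    using cubic_G unfolding cubic_def by simp
  obtain h r where "h \<in> VH - {u}" "r \<in> U"
    using H_block_nonempty U_nonempty by blast
  then have "{Inl h, Inr r} \<subseteq> VG"
    using K.U_subset v_notin_U by auto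
  then show "2 \<le> card VG"
    using finite_G card_mono[of VG "{Inl h, Inr r}"] by auto
  show "connected_on VG EG gG"
    using H_two_connected u unfolding two_connected_def
    by (intro connected_through_K[where WH = VH and FH = EH]) (auto simp: connected_on_def)
next
  fix p assume p: "p \<in> VG"
  then show "connected_on (VG - {p}) EG gG"
  proof (cases p)
    case (Inl x)
    then show ?thesis
      using p H_two_connected u unfolding two_connected_def
      by (intro connected_through_K[where WH = "VH - {x}" and FH = EH]) (auto simp: connected_on_def)
  next
    case (Inr y)
    then show ?thesis
      using p K_two_connected v unfolding two_connected_def
      by (intro connected_through_H[where WK = "VK - {y}" and FK = EK]) (auto simp: connected_on_def)
  qed
next
  fix z assume z: "z \<in> EG"
  then show "connected_on VG (EG - {z}) gG"
  proof (cases z)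
    case (Inl e)
    then show ?thesis
      using z H_two_connected u unfolding two_connected_def
      by (intro connected_through_K[where WH = VH and FH = "EH - {e}"]) (auto simp: connected_on_def)
  next
    case (Inr f)
    then show ?thesis
      using z K_two_connected v unfolding two_connected_def
      by (intro connected_through_H[where WK = VK and FK = "EK - {f}"]) (auto simp: connected_on_def)
  qed
qed
end

theorem theorem6p8:
  fixes VH :: "'a set" and EH :: "'e set" and gH :: "'e \<Rightarrow> 'a \<times> 'a" and u :: 'a
    and VK :: "'b set" and EK :: "'f set" and gK :: "'f \<Rightarrow> 'b \<times> 'b" and v :: 'b
    and U :: "'b set" and sigma :: "'e \<Rightarrow> 'f"
  assumes H2: "two_connected VH EH gH" and Hcub: "cubic VH EH gH"
    and Hsnark: "snark VH EH gH" and Hpmi: "pm_index VH EH gH \<ge> 5"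
    and K2: "two_connected VK EK gK" and Kcub: "cubic VK EK gK"
    and Kcol: "three_edge_colourable VK EK gK"
    and KU: "bipartising_set VK EK gK U"
    and u: "u \<in> VH" and v: "v \<in> VK"
    and vcomp: "{v} \<in> quasi_partite_set VK EK gK U"
    and sigma: "bij_betw sigma {e\<in>EH. incident gH e u} {f\<in>EK. incident gK f v}"
  shows "pm_index (sum3_V VH u VK v) (sum3_E EH gH u EK gK v) (sum3_g gH u gK v sigma) \<ge> 5
    \<and> quasi_bipartite (sum3_V VH u VK v) (sum3_E EH gH u EK gK v) (sum3_g gH u gK v sigma)
    \<and> bipartising_set (sum3_V VH u VK v) (sum3_E EH gH u EK gK v) (sum3_g gH u gK v sigma) (Inr ` U)
    \<and> quasi_partite_set (sum3_V VH u VK v) (sum3_E EH gH u EK gK v) (sum3_g gH u gK v sigma) (Inr ` U)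
        = insert (Inl ` (VH - {u})) ((\<lambda>C. Inr ` C) ` (quasi_partite_set VK EK gK U - {{v}}))"
proof -
  interpret three_sum VH EH gH u VK EK gK v U sigma
    using H2 Hcub K2 Kcub KU u v vcomp sigma by unfold_locales
  have "5 \<le> pm_index VG EG gG"
    using Hpmi pm_index_H_le_G by (rule order_trans)
  moreover have "quasi_bipartite VG EG gG"
    unfolding quasi_bipartite_def using two_connected_G cubic_G bipartising_set_G by blast
  moreover have "quasi_partite_set VG EG gG (Inr ` U)
      = insert (Inl ` (VH - {u})) ((\<lambda>C. Inr ` C) ` (quasi_partite_set VK EK gK U - {{v}}))"
    unfolding quasi_partite_set_def by (rule components_WG)
  ultimately show ?thesis
    using bipartising_set_G by blast
qed

end
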